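(* Assume $\operatorname{non}(\mathcal N)=\mathfrak c$. Then $\mathcal{NM}_{\mathfrak c}$, $\mathcal{NF}_{\mathfrak c}$ and $\mathcal{ND}_{\mathfrak c}$ are positively $2^{\mathfrak c}$-coneable in $\left(\mathbb R^{[0,1]}\right)^{\mathfrak c}$.
   Context: For a regular infinite cardinal $\kappa$ (viewed as the directed set of ordinals $<\kappa$ with the usual order), a $\kappa$-sequence $(x_\alpha)_{\alpha<\kappa}$ in a topological space converges to $x$ if for every neighbourhood $U$ of $x$ there is $\alpha_0<\kappa$ with $x_\alpha\in U$ for all $\alpha_0<\alpha<\kappa$; $\left(\mathbb R^{[0,1]}\right)^{\kappa}$ is the real vector space/algebra of $\kappa$-sequences of functions $[0,1]\to\mathbb R$ with indexwise operations. $\lambda$ is Lebesgue measure, $\mathcal N$ the null subsets of $[0,1]$, $\operatorname{non}(\mathcal N)$ the least cardinality of a non-null subset of $[0,1]$, $\mathfrak c=2^{\aleph_0}$. For bounded $\kappa$-sequences of reals, $\liminf$ is the infimum of the set of cluster points. $\mathcal{NM}_{\kappa}$: $\kappa$-sequences of Lebesgue measurable $f_\alpha:[0,1]\to\mathbb R$ with $0\le f_\alpha\le f_\beta$ a.e. whenever $\alpha\le\beta$, converging pointwise a.e. to an integrable $f$, and with $\int f_\alpha\,d\lambda$ not converging to $\int f\,d\lambda$. $\mathcal{NF}_{\kappa}$: $\kappa$-sequences of Lebesgue measurable $f_\alpha\ge0$ a.e. on $[0,1]$ with $x\mapsto\liminf_\alpha f_\alpha(x)$ integrable and $\int\liminf_\alpha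 f_\alpha\,d\lambda>\liminf_\alpha\int f_\alpha\,d\lambda$. $\mathcal{ND}_{\kappa}$: $\kappa$-sequences of Lebesgue measurable $f_\alpha:[0,1]\to\mathbb R$ with some integrable $g$ such that $|f_\alpha|\le g$ a.e. for all $\alpha$, $f_\alpha\to f$ a.e. for some integrable $f$, and $\int|f_\alpha-f|\,d\lambda\not\to0$. $S$ is positively $\mu$-coneable if there is a linearly independent $B\subset S$ with $\operatorname{card}(B)=\mu$ such that every combination $\sum a_ix_i$, $a_i>0$, $x_i\in B$ (finite) lies in $S$. *)

theory Defs
  imports "HOL-Analysis.Analysis" "HOL-Library.Function_Algebras"
begin

text \<open>Index set: the ordinals below the continuum, represented as the carrier UNIV::real
  well-ordered by the initial-ordinal well-order card_of UNIV (order type = initial ordinal of c).\<close>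

definition cidx :: "real rel" where
  "cidx = card_of (UNIV :: real set)"

definition cless :: "real \<Rightarrow> real \<Rightarrow> bool" where
  "cless a b \<longleftrightarrow> (a, b) \<in> cidx \<and> a \<noteq> b"

definition kconv :: "(real \<Rightarrow> 'b::topological_space) \<Rightarrow> 'b \<Rightarrow> bool" where
  "kconv x l \<longleftrightarrow> (\<forall>U. open U \<and> l \<in> U \<longrightarrow> (\<exists>a0. \<forall>a. cless a0 a \<longrightarrow> x a \<in> U))"

definition kcluster :: "(real \<Rightarrow> 'b::topological_space) \<Rightarrow> 'b \<Rightarrow> bool" where
  "kcluster x y \<longleftrightarrow> (\<forall>U. open U \<and> y \<in> U \<longrightarrow> (\<forall>a0. \<exists>a. cless a0 a \<and> x a \<in> U))"

definition kliminf :: "(real \<Rightarrow> ereal) \<Rightarrow> ereal" where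
  "kliminf x = Inf {y. kcluster x y}"

abbreviation I01 :: "real measure" where
  "I01 \<equiv> lebesgue_on {0..1}"

text \<open>Elements of (R^[0,1])^c: c-sequences of functions on [0,1], represented as
  real-valued functions on the reals vanishing outside [0,1].\<close>
definition KSeq :: "(real \<Rightarrow> real \<Rightarrow> real) set" where
  "KSeq = {f. \<forall>a x. x \<notin> {0..1} \<longrightarrow> f a x = 0}"

definition kscale :: "real \<Rightarrow> (real \<Rightarrow> real \<Rightarrow> real) \<Rightarrow> (real \<Rightarrow> real \<Rightarrow> real)" where
  "kscale c f = (\<lambda>a x. c * f a x)"

definition NM :: "(real \<Rightarrow> real \<Rightarrow> real) set" where
  "NM = {f \<in> KSeq.
     (\<forall>a. f a \<in> borel_measurable I01) \<and>
     (\<forall>a b. (a, b) \<in> cidx \<longrightarrow> (AE x in I01. 0 \<le> f a x \<and> f a x \<le> f b x)) \<and>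
     (\<exists>F. integrable I01 F \<and> (AE x in I01. kconv (\<lambda>a. f a x) (F x)) \<and>
          \<not> kconv (\<lambda>a. \<integral>\<^sup>+ x. ennreal (f a x) \<partial>I01) (\<integral>\<^sup>+ x. ennreal (F x) \<partial>I01))}"

definition NF :: "(real \<Rightarrow> real \<Rightarrow> real) set" where
  "NF = {f \<in> KSeq.
     (\<forall>a. f a \<in> borel_measurable I01 \<and> (AE x in I01. 0 \<le> f a x)) \<and>
     (let L = (\<lambda>x. kliminf (\<lambda>a. ereal (f a x))) in
        (AE x in I01. \<bar>L x\<bar> \<noteq> \<infinity>) \<and>
        integrable I01 (\<lambda>x. real_of_ereal (L x)) \<and>
        ereal (\<integral>x. real_of_ereal (L x) \<partial>I01) >
          kliminf (\<lambda>a. enn2ereal (\<integral>\<^sup>+ x. ennreal (f a x) \<partial>I01)))}"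

definition ND :: "(real \<Rightarrow> real \<Rightarrow> real) set" where
  "ND = {f \<in> KSeq.
     (\<forall>a. f a \<in> borel_measurable I01) \<and>
     (\<exists>g. integrable I01 g \<and> (\<forall>a. AE x in I01. \<bar>f a x\<bar> \<le> g x)) \<and>
     (\<exists>F. integrable I01 F \<and> (AE x in I01. kconv (\<lambda>a. f a x) (F x)) \<and>
          \<not> kconv (\<lambda>a. \<integral>x. \<bar>f a x - F x\<bar> \<partial>I01) 0)}"

text \<open>Positive mu-coneability, mu given as the cardinality of a set M.\<close>
definition pos_coneable :: "(real \<Rightarrow> real \<Rightarrow> real) set \<Rightarrow> 'm set \<Rightarrow> bool" where
  "pos_coneable S M \<longleftrightarrow> (\<exists>B. B \<subseteq> S \<and> \<not> module.dependent kscale B \<and> (card_of B, card_of M) \<in> ordIso \<and>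
     (\<forall>G c. finite G \<and> G \<noteq> {} \<and> G \<subseteq> B \<and> (\<forall>g\<in>G. c g > (0::real)) \<longrightarrow>
        (\<Sum>g\<in>G. kscale (c g) g) \<in> S))"

definition non_null_eq_c :: bool where
  "non_null_eq_c \<longleftrightarrow> (\<forall>A. A \<subseteq> {0..1::real} \<and> (card_of A, card_of (UNIV :: real set)) \<in> ordLess \<longrightarrow> A \<in> null_sets lebesgue)"

lemma vector_space_kscale: "vector_space kscale"
  by unfold_locales (auto simp: kscale_def fun_eq_iff algebra_simps)

end

theory Submission
  imports Defs
begin

text \<open>Under non(N) = c every proper initial segment of the well-ordering of [0,1] of type c is
  Lebesgue null. Hence the c-sequence f_a = C \<cdot> 1_{x < a} vanishes almost everywhere, so all its
  integrals are 0, while f_a(x) = C as soon as a > x, so it converges to C at every x > 0.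
  The value of f_a at the null point 0 is irrelevant for all three properties. Prescribing there
  the patterns a \<mapsto> [e(a) \<subseteq> T], for T \<subseteq> \<real> and e enumerating the finite lists of reals, gives
  2^c linearly independent such sequences, and a positive combination of them is again of the
  same shape.\<close>

unbundle cardinal_syntax

lemma Card_order_cidx: "Card_order cidx"
  and Field_cidx: "Field cidx = UNIV"
  and Well_order_cidx: "Well_order cidx"
  unfolding cidx_def by (rule card_of_Card_order, rule Field_card_of, rule card_of_Well_order)

lemma card_of_cless_ordLess: "|{x. cless x a}| <o |UNIV :: real set|"
proof -
  have "{x. cless x a} = underS cidx a"
    unfolding cless_def underS_def by auto
  then show ?thesis
    using card_of_underS[OF Card_order_cidx] Field_cidx unfolding cidx_def by simp
qed

lemma null_sets_cless:
  assumes "non_null_eq_c" "A \<subseteq> {0..1}" "A \<subseteq> {x. cless x a}"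
  shows "A \<in> null_sets lebesgue"
proof -
  have "|A| <o |UNIV :: real set|"
    using card_of_mono1[OF assms(3)] card_of_cless_ordLess by (rule ordLeq_ordLess_trans)
  then show ?thesis
    using assms(1,2) unfolding non_null_eq_c_def by blast
qed

lemma cless_cidx_trans:
  assumes "cless x a" "(a, b) \<in> cidx"
  shows "cless x b"
proof -
  have "(x, b) \<in> cidx"
    using assms Well_order_cidx unfolding cless_def by (metis wo_rel.TRANS wo_rel_def transD)
  moreover have "x \<noteq> b"
    using assms Well_order_cidx unfolding cless_def by (metis wo_rel.ANTISYM wo_rel_def antisymD)
  ultimately show ?thesis
    unfolding cless_def by simp
qed

lemma cless_trans: "cless x a \<Longrightarrow> cless a b \<Longrightarrow> cless x b"
  using cless_cidx_trans unfolding cless_def by metis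

lemma cless_linear: "a = b \<or> cless a b \<or> cless b a"
  using Well_order_cidx Field_cidx
  unfolding cless_def well_order_on_def linear_order_on_def total_on_def by blast

lemma cless_unbounded: "\<exists>a. cless a0 a"
proof -
  have "\<not> finite (Field cidx)"
    using Field_cidx infinite_UNIV_char_0 by simp
  then obtain b where "a0 \<noteq> b \<and> (a0, b) \<in> cidx"
    using infinite_Card_order_limit[OF Card_order_cidx] Field_cidx by blast
  then show ?thesis
    unfolding cless_def by blast
qed

lemma cless_upper_bound: "\<exists>a. cless a0 a \<and> cless a1 a"
proof -
  obtain m where m: "(a0 = m \<or> cless a0 m) \<and> (a1 = m \<or> cless a1 m)"
    using cless_linear[of a0 a1] by blast
  obtain a where "cless m a"
    using cless_unbounded by blast
  then show ?thesis
    using m cless_trans by blast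
qed

lemma kconv_eventually_const: "(\<And>a. cless a1 a \<Longrightarrow> s a = c) \<Longrightarrow> kconv s c"
  unfolding kconv_def by metis

lemma not_kconv_const:
  fixes c l :: "'b::t1_space"
  assumes "c \<noteq> l"
  shows "\<not> kconv (\<lambda>a. c) l"
proof
  assume "kconv (\<lambda>a. c) l"
  then obtain a0 where "\<forall>a. cless a0 a \<longrightarrow> c \<in> - {c}"
    using assms unfolding kconv_def by (metis ComplI open_Compl closed_singleton singletonD)
  then show False
    using cless_unbounded by blast
qed

lemma kcluster_eventually_const:
  fixes c :: "'b::t1_space"
  assumes ev: "\<And>a. cless a1 a \<Longrightarrow> s a = c"
  shows "{y. kcluster s y} = {c}"
proof -
  have "kcluster s c"
    unfolding kcluster_def using ev cless_upper_bound by metis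
  moreover have "\<not> kcluster s y" if "y \<noteq> c" for y
  proof
    assume "kcluster s y"
    moreover have "open (- {c})" "y \<in> - {c}"
      using that by auto
    ultimately obtain a where "cless a1 a" "s a \<in> - {c}"
      unfolding kcluster_def by blast
    then show False
      using ev by blast
  qed
  ultimately show ?thesis
    by blast
qed

lemma kliminf_eventually_const: "(\<And>a. cless a1 a \<Longrightarrow> s a = c) \<Longrightarrow> kliminf s = c"
  unfolding kliminf_def using kcluster_eventually_const[of a1 s c] by simp

lemma emeasure_I01: "emeasure I01 {0..1} = 1"
  by (simp add: emeasure_restrict_space)

lemma measure_I01: "measure I01 {0..1} = 1"
  by (simp add: measure_restrict_space)

lemma integrable_I01_const: "integrable I01 (\<lambda>x. c :: real)"
  by (intro finite_measure.integrable_const finite_measureI) (simp add: emeasure_I01)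

lemma sets_I01_null: "N \<in> null_sets lebesgue \<Longrightarrow> N \<subseteq> {0..1} \<Longrightarrow> N \<in> sets I01"
  unfolding sets_restrict_space by (auto intro!: image_eqI[of _ _ N])

lemma AE_I01_not_in: "N \<in> null_sets lebesgue \<Longrightarrow> AE x in I01. x \<notin> N"
  by (subst AE_restrict_space_iff) (auto intro: AE_mp[OF AE_not_in])

lemma AE_I01_ne_0: "AE x in I01. x \<noteq> 0"
  using AE_I01_not_in[of "{0}"] by simp

lemma AE_I01_pos: "AE x in I01. 0 < x \<and> x \<le> 1"
  using AE_I01_ne_0 AE_space[of I01] by eventually_elim auto

definition below_in_unit :: "real \<Rightarrow> real set" where
  "below_in_unit a = {x. 0 < x \<and> x \<le> 1 \<and> cless x a}"

definition segment_seq :: "real \<Rightarrow> (real \<Rightarrow> real) \<Rightarrow> real \<Rightarrow> real \<Rightarrow> real" where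
  "segment_seq C \<psi> = (\<lambda>a x. C * indicator (below_in_unit a) x + \<psi> a * indicator {0} x)"

lemma null_sets_below_in_unit: "non_null_eq_c \<Longrightarrow> below_in_unit a \<in> null_sets lebesgue"
  by (rule null_sets_cless[of _ a]) (auto simp: below_in_unit_def)

lemma segment_seq_KSeq: "segment_seq C \<psi> \<in> KSeq"
  unfolding KSeq_def segment_seq_def below_in_unit_def by (auto simp: indicator_def)

lemma segment_seq_pos_eq: "0 < x \<Longrightarrow> x \<le> 1 \<Longrightarrow> segment_seq C \<psi> a x = (if cless x a then C else 0)"
  unfolding segment_seq_def below_in_unit_def by (auto simp: indicator_def)

lemma segment_seq_measurable: "non_null_eq_c \<Longrightarrow> segment_seq C \<psi> a \<in> borel_measurable I01"
  unfolding segment_seq_def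
  by (intro borel_measurable_add borel_measurable_times borel_measurable_const borel_measurable_indicator
      sets_I01_null null_sets_below_in_unit) (auto simp: below_in_unit_def)

lemma AE_segment_seq_eq_0:
  assumes "non_null_eq_c"
  shows "AE x in I01. segment_seq C \<psi> a x = 0"
  using AE_I01_not_in[OF null_sets_below_in_unit[OF assms, of a]] AE_I01_ne_0
  by eventually_elim (simp add: segment_seq_def)

lemma AE_kconv_segment_seq: "AE x in I01. kconv (\<lambda>a. segment_seq C \<psi> a x) C"
  using AE_I01_pos by eventually_elim (auto intro!: kconv_eventually_const simp: segment_seq_pos_eq)

lemma nn_integral_segment_seq:
  assumes "non_null_eq_c"
  shows "(\<integral>\<^sup>+ x. ennreal (segment_seq C \<psi> a x) \<partial>I01) = 0"
proof -
  have "AE x in I01. ennreal (segment_seq C \<psi> a x) = 0"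
    using AE_segment_seq_eq_0[OF assms, of C \<psi> a] by eventually_elim simp
  then show ?thesis
    by (simp add: nn_integral_cong_AE)
qed

lemma segment_seq_NM:
  assumes "non_null_eq_c" "C > 0"
  shows "segment_seq C \<psi> \<in> NM"
proof -
  have mono: "AE x in I01. 0 \<le> segment_seq C \<psi> a x \<and> segment_seq C \<psi> a x \<le> segment_seq C \<psi> b x"
    if "(a, b) \<in> cidx" for a b
    using AE_I01_pos
    by eventually_elim (use assms(2) cless_cidx_trans[OF _ that] in \<open>auto simp: segment_seq_pos_eq\<close>)
  have "\<not> kconv (\<lambda>a. \<integral>\<^sup>+ x. ennreal (segment_seq C \<psi> a x) \<partial>I01) (\<integral>\<^sup>+ x. ennreal C \<partial>I01)"
    using not_kconv_const[of 0 "ennreal C"] assms by (simp add: nn_integral_segment_seq emeasure_I01)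
  then show ?thesis
    unfolding NM_def
    by (intro CollectI conjI allI impI exI[of _ "\<lambda>_. C"] segment_seq_KSeq
        segment_seq_measurable[OF assms(1)] mono integrable_I01_const AE_kconv_segment_seq)
qed

lemma segment_seq_ND:
  assumes "non_null_eq_c" "C > 0"
  shows "segment_seq C \<psi> \<in> ND"
proof -
  have dominated: "AE x in I01. \<bar>segment_seq C \<psi> a x\<bar> \<le> C" for a
    using AE_segment_seq_eq_0[OF assms(1), of C \<psi> a] by eventually_elim (use assms(2) in simp)
  have "(\<integral>x. \<bar>segment_seq C \<psi> a x - C\<bar> \<partial>I01) = C" for a
  proof -
    have "AE x in I01. \<bar>segment_seq C \<psi> a x - C\<bar> = C"
      using AE_segment_seq_eq_0[OF assms(1), of C \<psi> a] by eventually_elim (use assms(2) in simp)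
    then have "(\<integral>x. \<bar>segment_seq C \<psi> a x - C\<bar> \<partial>I01) = (\<integral>x. C \<partial>I01)"
      by (intro integral_cong_AE borel_measurable_abs borel_measurable_diff
          segment_seq_measurable[OF assms(1)]) simp_all
    then show ?thesis
      by (simp add: measure_I01)
  qed
  then have "\<not> kconv (\<lambda>a. \<integral>x. \<bar>segment_seq C \<psi> a x - C\<bar> \<partial>I01) 0"
    using not_kconv_const[of C 0] assms(2) by simp
  then show ?thesis
    unfolding ND_def
    by (intro CollectI conjI allI exI[of _ "\<lambda>_. C"] segment_seq_KSeq
        segment_seq_measurable[OF assms(1)] dominated integrable_I01_const AE_kconv_segment_seq)
qed

lemma segment_seq_NF:
  assumes "non_null_eq_c" "C > 0"
  shows "segment_seq C \<psi> \<in> NF"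
proof -
  define L where "L x = kliminf (\<lambda>a. ereal (segment_seq C \<psi> a x))" for x
  have L_pos: "L x = ereal C" if "0 < x" "x \<le> 1" for x
    unfolding L_def by (rule kliminf_eventually_const[of x]) (simp add: segment_seq_pos_eq that)
  have AE_L: "AE x in I01. L x = ereal C"
    using AE_I01_pos by eventually_elim (simp add: L_pos)
  have L_measurable: "(\<lambda>x. real_of_ereal (L x)) \<in> borel_measurable I01"
  proof (subst measurable_cong)
    show "real_of_ereal (L x) = C + (real_of_ereal (L 0) - C) * indicator {0} x" if "x \<in> space I01" for x
      using L_pos that by (auto simp: indicator_def)
    show "(\<lambda>x. C + (real_of_ereal (L 0) - C) * indicator {0} x) \<in> borel_measurable I01"
      by (intro borel_measurable_add borel_measurable_times borel_measurable_const
          borel_measurable_indicator sets_I01_null) auto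
  qed
  have AE_real_L: "AE x in I01. C = real_of_ereal (L x)"
    using AE_L by eventually_elim simp
  have L_integrable: "integrable I01 (\<lambda>x. real_of_ereal (L x))"
    by (rule integrable_cong_AE_imp[OF integrable_I01_const L_measurable AE_real_L])
  have kliminf_integrals: "kliminf (\<lambda>a. enn2ereal (\<integral>\<^sup>+ x. ennreal (segment_seq C \<psi> a x) \<partial>I01)) = 0"
    by (rule kliminf_eventually_const[of 0]) (simp add: nn_integral_segment_seq[OF assms(1)] zero_ennreal.rep_eq)
  have "(\<integral>x. real_of_ereal (L x) \<partial>I01) = (\<integral>x. C \<partial>I01)"
    using AE_real_L by (intro integral_cong_AE L_measurable) auto
  then have integral_L_gt: "ereal (\<integral>x. real_of_ereal (L x) \<partial>I01) >
      kliminf (\<lambda>a. enn2ereal (\<integral>\<^sup>+ x. ennreal (segment_seq C \<psi> a x) \<partial>I01))"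
    unfolding kliminf_integrals using assms(2) by (simp add: measure_I01)
  have AE_L_finite: "AE x in I01. \<bar>L x\<bar> \<noteq> \<infinity>"
    using AE_L by eventually_elim simp
  have AE_nonneg: "AE x in I01. 0 \<le> segment_seq C \<psi> a x" for a
    using AE_segment_seq_eq_0[OF assms(1), of C \<psi> a] by eventually_elim simp
  show ?thesis
    unfolding NF_def Let_def
    using AE_L_finite L_integrable integral_L_gt unfolding L_def
    by (intro CollectI conjI allI segment_seq_KSeq segment_seq_measurable[OF assms(1)] AE_nonneg)
      assumption+
qed

lemma sum_apply: "(\<Sum>g\<in>G. f g) a = (\<Sum>g\<in>G. f g a)"
  by (induction G rule: infinite_finite_induct) auto

fun decode_list :: "('a \<Rightarrow> 'a \<times> 'a) \<Rightarrow> nat \<Rightarrow> 'a \<Rightarrow> 'a list" where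
  "decode_list p 0 r = []"
| "decode_list p (Suc n) r = fst (p r) # decode_list p n (snd (p r))"

lemma decode_list_surj: "surj p \<Longrightarrow> \<exists>r. decode_list p (length xs) r = xs"
proof (induction xs)
  case (Cons y ys)
  then obtain r where "decode_list p (length ys) r = ys"
    by blast
  moreover obtain s where "p s = (y, r)"
    using Cons.prems by (metis surjD)
  ultimately have "decode_list p (length (y # ys)) s = y # ys"
    by simp
  then show ?case ..
qed simp

lemma infinite_surj_pair:
  assumes "infinite (UNIV :: 'a set)"
  shows "\<exists>p :: 'a \<Rightarrow> 'a \<times> 'a. surj p"
proof -
  have "|UNIV :: ('a \<times> 'a) set| =o |UNIV :: 'a set|"
    using card_of_Times_same_infinite[OF assms] by (simp only: UNIV_Times_UNIV)
  then have "|UNIV :: ('a \<times> 'a) set| \<le>o |UNIV :: 'a set|"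
    using ordIso_iff_ordLeq by blast
  then show ?thesis
    using card_of_ordLeq2[of "UNIV :: ('a \<times> 'a) set" "UNIV :: 'a set"] by auto
qed

lemma infinite_surj_list:
  assumes "infinite (UNIV :: 'a set)"
  shows "\<exists>e :: 'a \<Rightarrow> 'a list. surj e"
proof -
  obtain p :: "'a \<Rightarrow> 'a \<times> 'a" where p: "surj p"
    using infinite_surj_pair[OF assms] by blast
  obtain f :: "nat \<Rightarrow> 'a" where f: "inj f"
    using infinite_countable_subset[OF assms] by blast
  define e where "e r = decode_list p (inv f (fst (p r))) (snd (p r))" for r
  have "xs \<in> range e" for xs
  proof -
    obtain r where r: "decode_list p (length xs) r = xs"
      using decode_list_surj[OF p] by blast
    obtain s where "p s = (f (length xs), r)"
      using p by (metis surjD)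
    then have "e s = xs"
      using r f by (simp add: e_def)
    then show ?thesis
      by blast
  qed
  then show ?thesis
    by blast
qed

definition code_subset_indicator :: "('i \<Rightarrow> 'a list) \<Rightarrow> 'a set \<Rightarrow> 'i \<Rightarrow> real" where
  "code_subset_indicator e T i = (if set (e i) \<subseteq> T then 1 else 0)"

lemma inj_code_subset_indicator:
  assumes "surj e"
  shows "inj (code_subset_indicator e)"
proof (rule injI)
  fix T T' assume eq: "code_subset_indicator e T = code_subset_indicator e T'"
  show "T = T'"
  proof (rule set_eqI)
    fix y
    obtain i where "e i = [y]"
      using assms by (metis surjD)
    then show "y \<in> T \<longleftrightarrow> y \<in> T'"
      using fun_cong[OF eq, of i] by (simp add: code_subset_indicator_def split: if_splits)
  qed
qed

text \<open>Among the T with w T \<noteq> 0 take a maximal M, and pick a code of a finite subset of M that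
  meets every other such T outside of it: at that index only the M-term of the sum survives.\<close>

lemma code_subset_indicator_independent:
  assumes e: "surj e" and S: "finite S"
    and zero: "\<And>i. (\<Sum>T\<in>S. w T * code_subset_indicator e T i) = 0"
    and "T0 \<in> S"
  shows "w T0 = 0"
proof (rule ccontr)
  assume "w T0 \<noteq> 0"
  define S' where "S' = {T\<in>S. w T \<noteq> 0}"
  have "finite S'" "S' \<noteq> {}"
    using S \<open>T0 \<in> S\<close> \<open>w T0 \<noteq> 0\<close> unfolding S'_def by auto
  then obtain M where M: "M \<in> S'" and M_max: "\<And>T. T \<in> S' \<Longrightarrow> M \<subseteq> T \<Longrightarrow> M = T"
    using finite_has_maximal[of S'] by auto
  have "\<forall>T\<in>S' - {M}. \<exists>y. y \<in> M \<and> y \<notin> T"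
    using M_max by blast
  then obtain y where y: "\<And>T. T \<in> S' - {M} \<Longrightarrow> y T \<in> M \<and> y T \<notin> T"
    by (metis bchoice)
  have "finite (y ` (S' - {M}))"
    using \<open>finite S'\<close> by simp
  then obtain xs where xs: "set xs = y ` (S' - {M})"
    by (meson finite_list)
  obtain i where "e i = xs"
    using surjD[OF e, of xs] by metis
  then have i: "set (e i) = y ` (S' - {M})"
    using xs by simp
  have "set (e i) \<subseteq> M"
    using y by (auto simp: i)
  then have "code_subset_indicator e M i = 1"
    by (simp add: code_subset_indicator_def)
  moreover have "code_subset_indicator e T i = 0" if "T \<in> S' - {M}" for T
  proof -
    have "y T \<in> set (e i) - T"
      using y[OF that] that by (simp add: i)
    then show ?thesis
      unfolding code_subset_indicator_def by auto
  qed
  moreover have "(\<Sum>T\<in>S. w T * code_subset_indicator e T i) = (\<Sum>T\<in>S'. w T * code_subset_indicator e T i)"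
    by (rule sum.mono_neutral_right[OF S]) (auto simp: S'_def)
  ultimately have "(\<Sum>T\<in>S. w T * code_subset_indicator e T i) = w M"
    using sum.remove[OF \<open>finite S'\<close> M, of "\<lambda>T. w T * code_subset_indicator e T i"] by simp
  then show False
    using zero[of i] M unfolding S'_def by simp
qed

definition cone_generator :: "(real \<Rightarrow> real list) \<Rightarrow> real set \<Rightarrow> real \<Rightarrow> real \<Rightarrow> real" where
  "cone_generator e T = segment_seq 1 (code_subset_indicator e T)"

lemma cone_generator_at_0: "cone_generator e T a 0 = code_subset_indicator e T a"
  unfolding cone_generator_def segment_seq_def below_in_unit_def by simp

lemma inj_cone_generator:
  assumes "surj e"
  shows "inj (cone_generator e)"
proof (rule injI)
  fix T T' assume "cone_generator e T = cone_generator e T'"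
  then have "code_subset_indicator e T = code_subset_indicator e T'"
    by (intro ext) (metis cone_generator_at_0)
  then show "T = T'"
    by (rule injD[OF inj_code_subset_indicator[OF assms]])
qed

lemma sum_kscale_cone_generator:
  assumes "G \<subseteq> range (cone_generator e)"
  shows "(\<Sum>g\<in>G. kscale (c g) g) = segment_seq (\<Sum>g\<in>G. c g) (\<lambda>a. \<Sum>g\<in>G. c g * g a 0)"
proof (intro ext)
  fix a x
  have g: "g a x = indicator (below_in_unit a) x + g a 0 * indicator {0} x" if "g \<in> G" for g
    using assms that unfolding cone_generator_def segment_seq_def below_in_unit_def by auto
  have "(\<Sum>g\<in>G. kscale (c g) g) a x = (\<Sum>g\<in>G. c g * g a x)"
    by (simp add: sum_apply kscale_def)
  also have "\<dots> = (\<Sum>g\<in>G. c g * indicator (below_in_unit a) x + c g * g a 0 * indicator {0} x)"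
    by (rule sum.cong) (simp_all add: g algebra_simps)
  also have "\<dots> = segment_seq (\<Sum>g\<in>G. c g) (\<lambda>a. \<Sum>g\<in>G. c g * g a 0) a x"
    by (simp add: segment_seq_def sum.distrib sum_distrib_right)
  finally show "(\<Sum>g\<in>G. kscale (c g) g) a x = segment_seq (\<Sum>g\<in>G. c g) (\<lambda>a. \<Sum>g\<in>G. c g * g a 0) a x" .
qed

lemma independent_cone_generators:
  assumes e: "surj e"
  shows "\<not> module.dependent kscale (range (cone_generator e))"
proof
  assume "module.dependent kscale (range (cone_generator e))"
  then obtain t u where t: "finite t" "t \<subseteq> range (cone_generator e)" "(\<Sum>v\<in>t. kscale (u v) v) = 0"
    and nontrivial: "\<exists>v\<in>t. u v \<noteq> 0"
    unfolding module.dependent_explicit[OF vector_space_kscale[folded module_iff_vector_space]]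
    by blast
  define S where "S = {T. cone_generator e T \<in> t}"
  have inj: "inj (cone_generator e)"
    using inj_cone_generator[OF e] .
  have t_eq: "t = cone_generator e ` S"
    using t(2) unfolding S_def by blast
  have "finite S"
    using t(1) inj unfolding t_eq by (simp add: finite_image_iff inj_on_subset)
  moreover have "(\<Sum>T\<in>S. u (cone_generator e T) * code_subset_indicator e T a) = 0" for a
  proof -
    have "(\<Sum>v\<in>t. u v * v a 0) = 0"
      using fun_cong[OF fun_cong[OF t(3), of a], of 0] by (simp add: sum_apply kscale_def)
    then show ?thesis
      unfolding t_eq by (simp add: sum.reindex inj_on_subset[OF inj] cone_generator_at_0)
  qed
  ultimately have "u (cone_generator e T) = 0" if "T \<in> S" for T
    using code_subset_indicator_independent[OF e, of S "\<lambda>T. u (cone_generator e T)"] that by blast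
  then show False
    using nontrivial unfolding t_eq by blast
qed

lemma pos_coneable_segment_seqs:
  assumes "\<And>C \<psi>. C > 0 \<Longrightarrow> segment_seq C \<psi> \<in> S"
  shows "pos_coneable S (Pow (UNIV :: real set))"
proof -
  obtain e :: "real \<Rightarrow> real list" where e: "surj e"
    using infinite_surj_list[OF infinite_UNIV_char_0] by blast
  define B where "B = range (cone_generator e)"
  have "B \<subseteq> S"
    unfolding B_def cone_generator_def using assms by auto
  moreover have "\<not> module.dependent kscale B"
    unfolding B_def by (rule independent_cone_generators[OF e])
  moreover have "|B| =o |Pow (UNIV :: real set)|"
  proof -
    have "bij_betw (cone_generator e) (Pow UNIV) B"
      using inj_cone_generator[OF e] unfolding B_def by (simp add: bij_betw_def)
    then show ?thesis
      by (rule ordIso_symmetric[OF card_of_ordIsoI])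
  qed
  moreover have "(\<Sum>g\<in>G. kscale (c g) g) \<in> S"
    if "finite G" "G \<noteq> {}" "G \<subseteq> B" "\<forall>g\<in>G. c g > 0" for G c
  proof -
    have "(\<Sum>g\<in>G. c g) > 0"
      using that by (intro sum_pos) auto
    then show ?thesis
      using assms sum_kscale_cone_generator[of G e c] \<open>G \<subseteq> B\<close> unfolding B_def by simp
  qed
  ultimately show ?thesis
    unfolding pos_coneable_def by (intro exI[of _ B]) auto
qed

theorem mainTheorem7:
  assumes "non_null_eq_c"
  shows "pos_coneable NM (Pow (UNIV :: real set)) \<and>
         pos_coneable NF (Pow (UNIV :: real set)) \<and>
         pos_coneable ND (Pow (UNIV :: real set))"
  by (intro conjI pos_coneable_segment_seqs segment_seq_NM[OF assms] segment_seq_NF[OF assms]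
      segment_seq_ND[OF assms])

end
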